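(* For each $d\ge1$ let $B$ be a random $d\times d$ matrix with independent entries $B_{mn}\in\{0,1\}$, $\mathbb P(B_{mn}=1)=1/d$, and let $\{\theta_{mn}\}_{m,n}$ be i.i.d. random angles on the circle, independent of $B$. Define $B_\theta$ by $(B_\theta)_{mn}=B_{mn}e^{\mathrm i\theta_{mn}}$. Then for every positive integer $k$, the $k$-th moments of the averaged singular value (squared) distributions of the two ensembles coincide in the large-dimension limit: $$\lim_{d\to\infty}\frac1d\,\mathbb E_{B,\theta}\operatorname{tr}\big[(B_\theta^\dagger B_\theta)^k\big]=\lim_{d\to\infty}\frac1d\,\mathbb E_{B}\operatorname{tr}\big[(B^tB)^k\big].$$ *)

theory Defs
  imports "HOL-Probability.Probability" "Jordan_Normal_Form.Schur_Decomposition"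
begin

abbreviation entries :: "nat \<Rightarrow> (nat \<times> nat) set" where
  "entries d \<equiv> {0..<d} \<times> {0..<d}"

definition bern_ens :: "nat \<Rightarrow> (nat \<times> nat \<Rightarrow> bool) measure" where
  "bern_ens d = (\<Pi>\<^sub>M e\<in>entries d. measure_pmf (bernoulli_pmf (1 / real d)))"

definition phase_ens :: "real measure \<Rightarrow> nat \<Rightarrow> (nat \<times> nat \<Rightarrow> real) measure" where
  "phase_ens \<mu> d = (\<Pi>\<^sub>M e\<in>entries d. \<mu>)"

definition B_mat :: "nat \<Rightarrow> (nat \<times> nat \<Rightarrow> bool) \<Rightarrow> real mat" where
  "B_mat d b = mat d d (\<lambda>(m, n). if b (m, n) then 1 else 0)"

definition B_theta :: "nat \<Rightarrow> (nat \<times> nat \<Rightarrow> bool) \<Rightarrow> (nat \<times> nat \<Rightarrow> real) \<Rightarrow> complex mat" where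
  "B_theta d b \<theta> = mat d d (\<lambda>(m, n). (if b (m, n) then 1 else 0) * exp (\<i> * complex_of_real (\<theta> (m, n))))"

definition mat_trace :: "'a::comm_monoid_add mat \<Rightarrow> 'a" where
  "mat_trace A = (\<Sum>i<dim_row A. A $$ (i, i))"

end

theory Submission
  imports Defs
begin

text \<open>
  Expanding the trace writes \<open>tr[(B\<^sub>\<theta>\<^sup>\<dagger> B\<^sub>\<theta>)\<^sup>k]\<close> as a sum over closed walks of \<open>2k\<close> indices
  in \<open>{0..<d}\<close>, each step of a walk reading one entry of \<open>B\<^sub>\<theta>\<close>, conjugated at even steps.
  Averaging over \<open>B\<close> gives the walk the weight \<open>(1/d)^|E|\<close>, with \<open>E\<close> the set of distinct entries
  read, and averaging over the angles multiplies this by the characteristic function of the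
  angle law at the net number of plain minus conjugated reads of each entry of \<open>E\<close>.
  Grouping the walks by shape, a shape with \<open>q\<close> distinct indices is realised by
  \<open>d(d-1)\<cdots>(d-q+1)\<close> walks, and \<open>q \<le> |E| + 1\<close> because the walk connects its indices in the
  bipartite row/column graph with edge set \<open>E\<close>. Hence after dividing by \<open>d\<close> only the shapes with
  \<open>q = |E| + 1\<close> survive. Their graph is a tree, and a closed walk in a tree crosses every edge
  equally often in both directions, so all net counts vanish and the phase factor is \<open>1\<close>:
  both limits equal the number of these tree shapes.
\<close>

section \<open>Closed walks in trees\<close>

definition walk_steps :: "'v list \<Rightarrow> ('v \<times> 'v) list" where
  "walk_steps xs = zip xs (tl xs)"

definition walk_edges :: "'v list \<Rightarrow> 'v set set" where
  "walk_edges xs = (\<lambda>(a, b). {a, b}) ` set (walk_steps xs)"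

lemma walk_steps_Nil [simp]: "walk_steps [] = []"
  and walk_steps_singleton [simp]: "walk_steps [x] = []"
  and walk_steps_Cons_Cons [simp]: "walk_steps (x # y # zs) = (x, y) # walk_steps (y # zs)"
  by (simp_all add: walk_steps_def)

lemma walk_steps_append_Cons: "walk_steps (P @ u # Q) = walk_steps (P @ [u]) @ walk_steps (u # Q)"
  by (induction P rule: induct_list012) auto

lemma finite_walk_edges [simp]: "finite (walk_edges xs)"
  and walk_edges_singleton [simp]: "walk_edges [x] = {}"
  and walk_edges_Cons_Cons [simp]: "walk_edges (x # y # zs) = insert {x, y} (walk_edges (y # zs))"
  by (simp_all add: walk_edges_def)

lemma walk_steps_in_set: "(a, b) \<in> set (walk_steps xs) \<Longrightarrow> a \<in> set xs \<and> b \<in> set xs"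
  by (induction xs rule: induct_list012) auto

lemma walk_edges_subset_set: "e \<in> walk_edges xs \<Longrightarrow> e \<subseteq> set xs"
  by (auto simp: walk_edges_def dest: walk_steps_in_set)

lemma walk_edges_cover: "length xs \<ge> 2 \<Longrightarrow> y \<in> set xs \<Longrightarrow> \<exists>e\<in>walk_edges xs. y \<in> e"
proof (induction xs rule: induct_list012)
  case (3 x z zs)
  then show ?case
    by (cases zs) auto
qed auto

lemma card_set_le_card_walk_edges: "xs \<noteq> [] \<Longrightarrow> card (set xs) \<le> card (walk_edges xs) + 1"
proof (induction xs rule: induct_list012)
  case (3 x y zs)
  have IH: "card (set (y # zs)) \<le> card (walk_edges (y # zs)) + 1"
    using 3 by simp
  show ?case
  proof (cases "x \<in> set (y # zs)")
    case True
    then have "set (x # y # zs) = set (y # zs)" by auto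
    moreover have "card (walk_edges (y # zs)) \<le> card (walk_edges (x # y # zs))"
      by (simp add: card_mono subset_insertI)
    ultimately show ?thesis using IH by simp
  next
    case False
    then have "{x, y} \<notin> walk_edges (y # zs)"
      using walk_edges_subset_set by blast
    then show ?thesis using False IH by simp
  qed
qed auto

lemma sum_degrees_walk_edges:
  assumes "\<forall>(a, b)\<in>set (walk_steps xs). a \<noteq> b"
  shows "(\<Sum>y\<in>set xs. card {e \<in> walk_edges xs. y \<in> e}) = 2 * card (walk_edges xs)"
proof -
  have "(\<Sum>y\<in>set xs. card {e \<in> walk_edges xs. y \<in> e})
      = (\<Sum>y\<in>set xs. \<Sum>e\<in>walk_edges xs. of_bool (y \<in> e))"
    by (simp add: Int_def)
  also have "\<dots> = (\<Sum>e\<in>walk_edges xs. \<Sum>y\<in>set xs. of_bool (y \<in> e))"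
    by (rule sum.swap)
  also have "\<dots> = (\<Sum>e\<in>walk_edges xs. card e)"
    by (intro sum.cong refl) (simp add: Int_absorb1 walk_edges_subset_set)
  also have "\<dots> = (\<Sum>e\<in>walk_edges xs. 2)"
    using assms by (intro sum.cong refl) (auto simp: walk_edges_def)
  finally show ?thesis by simp
qed

lemma tree_walk_has_leaf:
  assumes "length xs \<ge> 2" and "\<forall>(a, b)\<in>set (walk_steps xs). a \<noteq> b"
    and tree: "card (set xs) = card (walk_edges xs) + 1" and "v \<in> set xs"
  obtains y where "y \<in> set xs" "y \<noteq> v" "card {e \<in> walk_edges xs. y \<in> e} = 1"
proof -
  define deg where "deg y = card {e \<in> walk_edges xs. y \<in> e}" for y
  have deg_pos: "deg y \<ge> 1" if "y \<in> set xs" for y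
    using walk_edges_cover[OF assms(1) that] by (auto simp: deg_def Suc_le_eq card_gt_0_iff)
  have "\<exists>y\<in>set xs - {v}. deg y < 2"
  proof (rule ccontr)
    assume "\<not> ?thesis"
    then have "\<forall>y\<in>set xs - {v}. 2 \<le> deg y"
      by (simp add: not_less)
    then have "(\<Sum>y\<in>set xs - {v}. 2) \<le> (\<Sum>y\<in>set xs - {v}. deg y)"
      by (intro sum_mono) auto
    moreover have "(\<Sum>y\<in>set xs. deg y) = deg v + (\<Sum>y\<in>set xs - {v}. deg y)"
      using \<open>v \<in> set xs\<close> by (simp add: sum.remove)
    moreover have "(\<Sum>y\<in>set xs. deg y) = 2 * card (walk_edges xs)"
      unfolding deg_def by (rule sum_degrees_walk_edges[OF assms(2)])
    ultimately show False
      using deg_pos[OF \<open>v \<in> set xs\<close>] tree \<open>v \<in> set xs\<close> by (simp add: card_Diff_singleton)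
  qed
  then obtain y where "y \<in> set xs" "y \<noteq> v" "deg y < 2"
    by blast
  moreover have "deg y \<ge> 1"
    using deg_pos[OF \<open>y \<in> set xs\<close>] .
  ultimately show ?thesis
    using that unfolding deg_def by simp
qed

lemma leaf_visit_backtracks:
  assumes "\<forall>(a, b)\<in>set (walk_steps xs). a \<noteq> b"
    and leaf: "card {e \<in> walk_edges xs. y \<in> e} = 1"
    and "y \<in> set xs" "y \<noteq> hd xs" "y \<noteq> last xs"
  obtains P z Q where "xs = P @ z # y # z # Q"
proof -
  obtain A C where xs: "xs = A @ y # C"
    using split_list[OF \<open>y \<in> set xs\<close>] by blast
  have "A \<noteq> []"
    using xs \<open>y \<noteq> hd xs\<close> by (cases A) simp_all
  moreover have "C \<noteq> []"
    using xs \<open>y \<noteq> last xs\<close> by (cases C) simp_all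
  ultimately obtain P z c Q where A: "A = P @ [z]" and C: "C = c # Q"
    by (metis list.exhaust rev_exhaust)
  have "walk_steps xs = walk_steps (P @ [z]) @ (z, y) # (y, c) # walk_steps (c # Q)"
    unfolding xs A C using walk_steps_append_Cons[of P z "y # c # Q"] by simp
  then have zy: "(z, y) \<in> set (walk_steps xs)" and yc: "(y, c) \<in> set (walk_steps xs)"
    by simp_all
  obtain e where e: "{e' \<in> walk_edges xs. y \<in> e'} = {e}"
    using leaf by (rule card_1_singletonE)
  have "{z, y} \<in> walk_edges xs" "{y, c} \<in> walk_edges xs"
    unfolding walk_edges_def by (rule rev_image_eqI[OF zy], simp) (rule rev_image_eqI[OF yc], simp)
  then have "{z, y} \<in> {e' \<in> walk_edges xs. y \<in> e'}" "{y, c} \<in> {e' \<in> walk_edges xs. y \<in> e'}"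
    by simp_all
  then have "{z, y} = {y, c}"
    unfolding e by simp
  moreover have "z \<noteq> y"
    using assms(1) zy by blast
  ultimately have "c = z"
    by (simp add: doubleton_eq_iff)
  then show ?thesis
    using xs A C by (intro that[of P z Q]) simp
qed

lemma walk_backtrack_removal:
  "mset (walk_steps (P @ z # y # z # Q)) = mset (walk_steps (P @ z # Q)) + {#(z, y), (y, z)#}"
  "walk_edges (P @ z # y # z # Q) = insert {z, y} (walk_edges (P @ z # Q))"
  "set (P @ z # y # z # Q) = insert y (set (P @ z # Q))"
  "hd (P @ z # y # z # Q) = hd (P @ z # Q)"
  "last (P @ z # y # z # Q) = last (P @ z # Q)"
proof -
  have "walk_steps (P @ z # y # z # Q) = walk_steps (P @ [z]) @ (z, y) # (y, z) # walk_steps (z # Q)"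
    using walk_steps_append_Cons[of P z "y # z # Q"] by simp
  moreover have "walk_steps (P @ z # Q) = walk_steps (P @ [z]) @ walk_steps (z # Q)"
    by (rule walk_steps_append_Cons)
  ultimately show
    "mset (walk_steps (P @ z # y # z # Q)) = mset (walk_steps (P @ z # Q)) + {#(z, y), (y, z)#}"
    "walk_edges (P @ z # y # z # Q) = insert {z, y} (walk_edges (P @ z # Q))"
    by (auto simp: walk_edges_def insert_commute)
  show "set (P @ z # y # z # Q) = insert y (set (P @ z # Q))"
    by auto
  show "hd (P @ z # y # z # Q) = hd (P @ z # Q)"
    by (cases P) simp_all
  show "last (P @ z # y # z # Q) = last (P @ z # Q)"
    by (cases Q) simp_all
qed

lemma tree_walk_backtrack_removal:
  assumes "card (set (P @ z # y # z # Q)) = card (walk_edges (P @ z # y # z # Q)) + 1"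
  shows "card (set (P @ z # Q)) = card (walk_edges (P @ z # Q)) + 1"
proof (cases "y \<in> set (P @ z # Q)")
  case True
  then have "set (P @ z # Q) = set (P @ z # y # z # Q)"
    by (simp only: walk_backtrack_removal(3) insert_absorb)
  moreover have "card (walk_edges (P @ z # Q)) \<le> card (walk_edges (P @ z # y # z # Q))"
    by (simp add: walk_backtrack_removal(2) card_mono subset_insertI)
  ultimately show ?thesis
    using assms card_set_le_card_walk_edges[of "P @ z # Q"] by simp
next
  case False
  then have "{z, y} \<notin> walk_edges (P @ z # Q)"
    using walk_edges_subset_set by blast
  then show ?thesis
    using assms False walk_backtrack_removal(2,3)[of P z y Q] by simp
qed

lemma count_pair_mset_swap: "count {#(z, y), (y, z)#} (a, b) = count {#(z, y), (y, z)#} (b, a)"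
proof -
  have count: "count {#(z, y), (y, z)#} p = of_bool (p = (z, y)) + of_bool (p = (y, z))" for p
    by (simp only: count_add_mset count_empty) simp
  have "((a, b) = (z, y)) = ((b, a) = (y, z))" "((a, b) = (y, z)) = ((b, a) = (z, y))"
    by auto
  then show ?thesis
    unfolding count by (simp only: add.commute)
qed

lemma closed_tree_walk_balanced:
  assumes "xs \<noteq> []" "hd xs = last xs" "\<forall>(a, b)\<in>set (walk_steps xs). a \<noteq> b"
    and "card (set xs) = card (walk_edges xs) + 1"
  shows "count (mset (walk_steps xs)) (a, b) = count (mset (walk_steps xs)) (b, a)"
  using assms
proof (induction xs rule: length_induct)
  case (1 xs)
  show ?case
  proof (cases "length xs \<ge> 2")
    case False
    then have "walk_steps xs = []"
      using \<open>xs \<noteq> []\<close> by (cases xs) (auto simp: walk_steps_def Suc_le_eq)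
    then show ?thesis by simp
  next
    case True
    obtain y where y: "y \<in> set xs" "y \<noteq> hd xs" "card {e \<in> walk_edges xs. y \<in> e} = 1"
      using tree_walk_has_leaf[OF True "1.prems"(3,4) hd_in_set[OF \<open>xs \<noteq> []\<close>]] .
    obtain P z Q where xs: "xs = P @ z # y # z # Q"
      using leaf_visit_backtracks[OF "1.prems"(3) y(3,1,2) y(2)[unfolded "1.prems"(2)]] .
    let ?ys = "P @ z # Q"
    have steps: "mset (walk_steps xs) = mset (walk_steps ?ys) + {#(z, y), (y, z)#}"
      unfolding xs by (rule walk_backtrack_removal)
    have shorter: "length ?ys < length xs" and nonempty: "?ys \<noteq> []"
      unfolding xs by simp_all
    have closed: "hd ?ys = last ?ys"
      using "1.prems"(2) unfolding xs walk_backtrack_removal(4,5) .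
    have "set (walk_steps ?ys) \<subseteq> set (walk_steps xs)"
      using arg_cong[OF steps, of set_mset] by auto
    then have loopless: "\<forall>(a, b)\<in>set (walk_steps ?ys). a \<noteq> b"
      using "1.prems"(3) by blast
    have tree: "card (set ?ys) = card (walk_edges ?ys) + 1"
      using "1.prems"(4) unfolding xs by (rule tree_walk_backtrack_removal)
    have "count (mset (walk_steps ?ys)) (a, b) = count (mset (walk_steps ?ys)) (b, a)"
      using "1.IH"[rule_format, OF shorter nonempty closed bspec[OF loopless] tree] .
    moreover have "count {#(z, y), (y, z)#} (a, b) = count {#(z, y), (y, z)#} (b, a)"
      by (rule count_pair_mset_swap)
    ultimately show ?thesis
      by (simp only: steps count_union)
  qed
qed

section \<open>Shapes of index lists\<close>

text \<open>Two lists have the same shape iff they differ by an injective relabelling of their entries.\<close>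

definition first_index :: "'a list \<Rightarrow> 'a \<Rightarrow> nat" where
  "first_index xs v = (LEAST i. i < length xs \<and> xs ! i = v)"

definition shape :: "'a list \<Rightarrow> nat list" where
  "shape xs = map (first_index xs) xs"

definition index_lists :: "nat \<Rightarrow> nat \<Rightarrow> nat list set" where
  "index_lists d n = {x. set x \<subseteq> {..<d} \<and> length x = n}"

definition shapes :: "nat \<Rightarrow> nat list set" where
  "shapes n = shape ` index_lists n n"

lemma first_index_correct: "v \<in> set xs \<Longrightarrow> first_index xs v < length xs \<and> xs ! first_index xs v = v"
  unfolding first_index_def by (rule LeastI_ex) (auto simp: in_set_conv_nth)

lemma inj_on_first_index: "inj_on (first_index xs) (set xs)"
  by (metis first_index_correct inj_onI)

lemma length_shape [simp]: "length (shape xs) = length xs"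
  by (simp add: shape_def)

lemma set_shape_subset: "set (shape xs) \<subseteq> {..<length xs}"
  by (auto simp: shape_def first_index_correct)

lemma first_index_map:
  assumes "inj_on h (set xs)" "v \<in> set xs"
  shows "first_index (map h xs) (h v) = first_index xs v"
proof -
  have "(i < length xs \<and> map h xs ! i = h v) = (i < length xs \<and> xs ! i = v)" for i
    using assms by (auto simp: inj_on_eq_iff)
  then show ?thesis
    by (simp add: first_index_def)
qed

lemma shape_map: "inj_on h (set xs) \<Longrightarrow> shape (map h xs) = shape xs"
  by (auto simp: shape_def first_index_map)

lemma shape_shape [simp]: "shape (shape xs) = shape xs"
  by (metis shape_def shape_map inj_on_first_index)

lemma nth_shape_fixed:
  assumes "i \<in> set (shape xs)"
  shows "shape xs ! i = i"
proof -
  obtain v where v: "v \<in> set xs" "i = first_index xs v"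
    using assms by (auto simp: shape_def)
  then show ?thesis
    using first_index_correct[OF v(1)] by (simp add: shape_def)
qed

lemma map_nth_shape: "map ((!) xs) (shape xs) = xs"
  by (rule nth_equalityI) (auto simp: shape_def first_index_correct)

lemma first_index_nth_shape:
  assumes "i \<in> set (shape x)"
  shows "first_index x (x ! i) = i"
proof -
  have "i < length x"
    using assms set_shape_subset by fastforce
  then have "first_index x (x ! i) = shape x ! i"
    by (simp add: shape_def)
  then show ?thesis
    using nth_shape_fixed[OF assms] by simp
qed

lemma inj_on_nth_set_shape: "inj_on ((!) x) (set (shape x))"
  by (metis first_index_nth_shape inj_onI)

lemma finite_index_lists [simp]: "finite (index_lists d n)"
  unfolding index_lists_def using finite_lists_length_eq[of "{..<d}" n] by simp

lemma length_index_lists: "x \<in> index_lists d n \<Longrightarrow> length x = n"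
  by (simp add: index_lists_def)

lemma nth_index_lists: "x \<in> index_lists d n \<Longrightarrow> i < length x \<Longrightarrow> x ! i < d"
  by (auto simp: index_lists_def dest!: nth_mem)

lemma shape_in_shapes: "x \<in> index_lists d n \<Longrightarrow> shape x \<in> shapes n"
  unfolding shapes_def index_lists_def using set_shape_subset
  by (intro image_eqI[of _ _ "shape x"]) auto

lemma finite_shapes [simp]: "finite (shapes n)"
  by (simp add: shapes_def)

lemma length_shapes: "s \<in> shapes n \<Longrightarrow> length s = n"
  by (auto simp: shapes_def index_lists_def)

lemma bij_betw_shape_fibre:
  assumes "s \<in> shapes n"
  defines "V \<equiv> set s"
  shows "bij_betw (\<lambda>x. restrict ((!) x) V) {x \<in> index_lists d n. shape x = s}
    {\<alpha> \<in> V \<rightarrow>\<^sub>E {..<d}. inj_on \<alpha> V}"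
proof -
  have s_shape: "shape s = s"
    using assms by (auto simp: shapes_def)
  have fixed: "s ! i = i" if "i \<in> V" for i
    using nth_shape_fixed[of i s] that s_shape by (simp add: V_def)
  have V_lt: "i < length s" if "i \<in> V" for i
    using that set_shape_subset[of s] s_shape by (auto simp: V_def)
  show ?thesis
  proof (rule bij_betw_byWitness[where f' = "\<lambda>\<alpha>. map \<alpha> s"])
    show "\<forall>x\<in>{x \<in> index_lists d n. shape x = s}. map (restrict ((!) x) V) s = x"
    proof
      fix x assume "x \<in> {x \<in> index_lists d n. shape x = s}"
      then have "map ((!) x) s = x"
        using map_nth_shape[of x] by simp
      then show "map (restrict ((!) x) V) s = x"
        by (simp add: V_def cong: map_cong)
    qed
    show "\<forall>\<alpha>\<in>{\<alpha> \<in> V \<rightarrow>\<^sub>E {..<d}. inj_on \<alpha> V}. restrict ((!) (map \<alpha> s)) V = \<alpha>"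
    proof (intro ballI ext)
      fix \<alpha> i assume \<alpha>: "\<alpha> \<in> {\<alpha> \<in> V \<rightarrow>\<^sub>E {..<d}. inj_on \<alpha> V}"
      show "restrict ((!) (map \<alpha> s)) V i = \<alpha> i"
      proof (cases "i \<in> V")
        case True
        then show ?thesis
          using fixed V_lt by simp
      next
        case False
        then show ?thesis
          using \<alpha> by (auto simp: PiE_def extensional_def)
      qed
    qed
    show "(\<lambda>x. restrict ((!) x) V) ` {x \<in> index_lists d n. shape x = s}
        \<subseteq> {\<alpha> \<in> V \<rightarrow>\<^sub>E {..<d}. inj_on \<alpha> V}"
    proof (rule image_subsetI)
      fix x assume "x \<in> {x \<in> index_lists d n. shape x = s}"
      then have x: "x \<in> index_lists d n" "shape x = s"
        by simp_all
      have len: "length x = length s"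
        using x(2) length_shape[of x] by simp
      have "x ! i < d" if "i \<in> V" for i
        using nth_index_lists[OF x(1)] V_lt[OF that] len by simp
      moreover have "inj_on ((!) x) V"
        using inj_on_nth_set_shape[of x] x(2) by (simp add: V_def)
      ultimately show "restrict ((!) x) V \<in> {\<alpha> \<in> V \<rightarrow>\<^sub>E {..<d}. inj_on \<alpha> V}"
        by (simp add: Pi_iff)
    qed
    show "(\<lambda>\<alpha>. map \<alpha> s) ` {\<alpha> \<in> V \<rightarrow>\<^sub>E {..<d}. inj_on \<alpha> V} \<subseteq> {x \<in> index_lists d n. shape x = s}"
    proof clarify
      fix \<alpha> assume "\<alpha> \<in> V \<rightarrow>\<^sub>E {..<d}" "inj_on \<alpha> V"
      then show "map \<alpha> s \<in> index_lists d n \<and> shape (map \<alpha> s) = s"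
        using shape_map[of \<alpha> s] s_shape length_shapes[OF assms(1)]
        by (auto simp: V_def index_lists_def)
    qed
  qed
qed

lemma card_shape_fibre:
  assumes "s \<in> shapes n"
  shows "card {x \<in> index_lists d n. shape x = s} = (\<Prod>i<card (set s). d - i)"
proof -
  have "card {x \<in> index_lists d n. shape x = s} = card {\<alpha> \<in> set s \<rightarrow>\<^sub>E {..<d}. inj_on \<alpha> (set s)}"
    using bij_betw_shape_fibre[OF assms] by (rule bij_betw_same_card)
  also have "\<dots> = (\<Prod>i<card (set s). d - i)"
    using card_inj_on_subset_funcset[of "set s" "{..<d}" "set s"] by (simp add: atLeast0LessThan)
  finally show ?thesis .
qed

lemma sum_index_lists_by_shape:
  fixes G :: "nat list \<Rightarrow> 'a::comm_semiring_1"
  assumes relabel: "\<And>x h. inj_on h (set x) \<Longrightarrow> G (map h x) = G x"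
  shows "(\<Sum>x\<in>index_lists d n. G x)
    = (\<Sum>s\<in>shapes n. of_nat (card {x \<in> index_lists d n. shape x = s}) * G s)"
proof -
  have "(\<Sum>x\<in>index_lists d n. G x) = (\<Sum>s\<in>shapes n. \<Sum>x\<in>{x \<in> index_lists d n. shape x = s}. G x)"
    by (rule sum.group[symmetric]) (auto intro: shape_in_shapes)
  also have "\<dots> = (\<Sum>s\<in>shapes n. of_nat (card {x \<in> index_lists d n. shape x = s}) * G s)"
  proof (rule sum.cong[OF refl])
    fix s
    have "G x = G s" if "shape x = s" for x
      using that relabel[OF inj_on_first_index[of x]] by (simp add: shape_def)
    then show "(\<Sum>x\<in>{x \<in> index_lists d n. shape x = s}. G x)
        = of_nat (card {x \<in> index_lists d n. shape x = s}) * G s"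
      by simp
  qed
  finally show ?thesis .
qed

section \<open>Matrix entries read by a closed index walk\<close>

text \<open>
  In the expansion of the trace of \<open>(A\<^sup>\<dagger> A)\<^sup>k\<close> over closed walks \<open>x\<close> of length \<open>2k\<close>, step \<open>j\<close>
  reads the entry \<open>walk_entry x j\<close> of \<open>A\<close>: through \<open>A\<^sup>\<dagger>\<close>, hence conjugated (sign \<open>-1\<close>), for even
  \<open>j\<close> and directly (sign \<open>1\<close>) for odd \<open>j\<close>.
\<close>

definition walk_entry :: "nat list \<Rightarrow> nat \<Rightarrow> nat \<times> nat" where
  "walk_entry x j =
    (if even j then (x ! (Suc j mod length x), x ! j) else (x ! j, x ! (Suc j mod length x)))"

definition walk_sign :: "nat \<Rightarrow> int" where
  "walk_sign j = (if even j then -1 else 1)"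

definition walk_entries :: "nat list \<Rightarrow> (nat \<times> nat) set" where
  "walk_entries x = walk_entry x ` {..<length x}"

definition net_flow :: "nat list \<Rightarrow> nat \<times> nat \<Rightarrow> int" where
  "net_flow x e = (\<Sum>j | j < length x \<and> walk_entry x j = e. walk_sign j)"

definition flow_prod :: "(int \<Rightarrow> 'a::comm_monoid_mult) \<Rightarrow> nat list \<Rightarrow> 'a" where
  "flow_prod F x = (\<Prod>e\<in>walk_entries x. F (net_flow x e))"

lemma finite_walk_entries [simp]: "finite (walk_entries x)"
  by (simp add: walk_entries_def)

lemma Suc_mod_length_less: "j < length x \<Longrightarrow> Suc j mod length x < length x"
  by (cases x) auto

lemma walk_entry_in_entries: "x \<in> index_lists d n \<Longrightarrow> j < length x \<Longrightarrow> walk_entry x j \<in> entries d"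
  using nth_index_lists[of x d n] Suc_mod_length_less[of j x] by (auto simp: walk_entry_def)

lemma walk_entries_subset_entries:
  assumes "x \<in> index_lists d n"
  shows "walk_entries x \<subseteq> entries d"
  unfolding walk_entries_def by (intro image_subsetI walk_entry_in_entries[OF assms]) simp

lemma walk_entry_map: "j < length x \<Longrightarrow> walk_entry (map h x) j = map_prod h h (walk_entry x j)"
  using Suc_mod_length_less[of j x] by (simp add: walk_entry_def)

lemma walk_entries_map: "walk_entries (map h x) = map_prod h h ` walk_entries x"
  by (auto simp: walk_entries_def walk_entry_map image_image)

lemma inj_on_map_prod_walk_entries:
  assumes "inj_on h (set x)"
  shows "inj_on (map_prod h h) (walk_entries x)"
proof -
  have "walk_entries x \<subseteq> set x \<times> set x"
    using Suc_mod_length_less by (auto simp: walk_entries_def walk_entry_def intro!: nth_mem)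
  then show ?thesis
    by (rule inj_on_subset[OF map_prod_inj_on[OF assms assms]])
qed

lemma card_walk_entries_map: "inj_on h (set x) \<Longrightarrow> card (walk_entries (map h x)) = card (walk_entries x)"
  by (simp add: walk_entries_map card_image inj_on_map_prod_walk_entries)

lemma net_flow_map:
  assumes "inj_on h (set x)" "e \<in> walk_entries x"
  shows "net_flow (map h x) (map_prod h h e) = net_flow x e"
proof -
  have "walk_entry (map h x) j = map_prod h h e \<longleftrightarrow> walk_entry x j = e" if "j < length x" for j
    using inj_on_map_prod_walk_entries[OF assms(1)] assms(2) that
    by (simp add: walk_entry_map inj_on_eq_iff walk_entries_def)
  then show ?thesis
    by (auto simp: net_flow_def intro: sum.cong)
qed

lemma flow_prod_map:
  assumes "inj_on h (set x)"
  shows "flow_prod F (map h x) = flow_prod F x"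
proof -
  have "flow_prod F (map h x) = (\<Prod>e\<in>walk_entries x. F (net_flow (map h x) (map_prod h h e)))"
    unfolding flow_prod_def walk_entries_map
    by (rule prod.reindex[OF inj_on_map_prod_walk_entries[OF assms], unfolded comp_def])
  also have "\<dots> = flow_prod F x"
    unfolding flow_prod_def by (rule prod.cong) (auto simp: net_flow_map[OF assms])
  finally show ?thesis .
qed

text \<open>
  Rows and columns form the two sides of a bipartite graph in which an entry \<open>(r, c)\<close> is the edge
  \<open>{(1, r), (0, c)}\<close>; the closed walk \<open>x\<close> of even length becomes a closed walk in this graph
  which alternates between the two sides.
\<close>

definition entry_edge :: "nat \<times> nat \<Rightarrow> (nat \<times> nat) set" where
  "entry_edge e = {(1, fst e), (0, snd e)}"

definition bipartite_walk :: "nat list \<Rightarrow> (nat \<times> nat) list" where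
  "bipartite_walk x = map (\<lambda>j. (j mod 2, x ! (j mod length x))) [0..<Suc (length x)]"

lemma inj_entry_edge: "inj entry_edge"
  by (auto simp: entry_edge_def inj_def doubleton_eq_iff)

lemma walk_steps_bipartite_walk:
  "walk_steps (bipartite_walk x)
    = map (\<lambda>j. ((j mod 2, x ! (j mod length x)), (Suc j mod 2, x ! (Suc j mod length x)))) [0..<length x]"
  by (rule nth_equalityI) (auto simp: walk_steps_def bipartite_walk_def nth_tl simp del: upt_Suc)

lemma walk_edges_bipartite_walk:
  assumes "even (length x)"
  shows "walk_edges (bipartite_walk x) = entry_edge ` walk_entries x"
proof -
  have "{(j mod 2, x ! (j mod length x)), (Suc j mod 2, x ! (Suc j mod length x))}
      = entry_edge (walk_entry x j)" if "j < length x" for j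
    using assms that by (auto simp: entry_edge_def walk_entry_def mod2_eq_if)
  then show ?thesis
    unfolding walk_edges_def walk_steps_bipartite_walk walk_entries_def
    by (force simp: image_image atLeast0LessThan intro: image_cong)
qed

lemma card_walk_edges_bipartite_walk:
  "even (length x) \<Longrightarrow> card (walk_edges (bipartite_walk x)) = card (walk_entries x)"
  by (simp add: walk_edges_bipartite_walk card_image inj_on_subset[OF inj_entry_edge])

lemma card_set_le_card_set_bipartite_walk: "card (set x) \<le> card (set (bipartite_walk x))"
proof -
  have "set x \<subseteq> snd ` set (bipartite_walk x)"
  proof
    fix v assume "v \<in> set x"
    then obtain i where "i < length x" "x ! i = v"
      by (auto simp: in_set_conv_nth)
    then show "v \<in> snd ` set (bipartite_walk x)"
      by (force simp: bipartite_walk_def)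
  qed
  then have "card (set x) \<le> card (snd ` set (bipartite_walk x))"
    by (simp add: card_mono)
  also have "\<dots> \<le> card (set (bipartite_walk x))"
    by (rule card_image_le) simp
  finally show ?thesis .
qed

lemma card_set_le_card_walk_entries:
  assumes "even (length x)"
  shows "card (set x) \<le> card (walk_entries x) + 1"
proof -
  have "card (set (bipartite_walk x)) \<le> card (walk_edges (bipartite_walk x)) + 1"
    by (rule card_set_le_card_walk_edges) (simp add: bipartite_walk_def)
  then show ?thesis
    using card_set_le_card_set_bipartite_walk[of x] card_walk_edges_bipartite_walk[OF assms] by simp
qed

lemma net_flow_eq_0_if_tree:
  assumes "x \<noteq> []" "even (length x)" and tree: "card (set x) = card (walk_entries x) + 1"
  shows "net_flow x e = 0"
proof -
  obtain r c where e: "e = (r, c)"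
    by (cases e)
  define forward where "forward = {j. j < length x \<and> odd j \<and> walk_entry x j = (r, c)}"
  define backward where "backward = {j. j < length x \<and> even j \<and> walk_entry x j = (r, c)}"
  have "bipartite_walk x \<noteq> []"
    by (simp add: bipartite_walk_def)
  moreover have "hd (bipartite_walk x) = last (bipartite_walk x)"
    using assms(2) by (simp add: bipartite_walk_def hd_map last_map del: upt_Suc)
  moreover have "\<forall>(a, b)\<in>set (walk_steps (bipartite_walk x)). a \<noteq> b"
    unfolding walk_steps_bipartite_walk by (auto simp: mod2_eq_if)
  moreover have "card (set (bipartite_walk x)) = card (walk_edges (bipartite_walk x)) + 1"
    using card_set_le_card_walk_edges[OF calculation(1)] card_set_le_card_set_bipartite_walk[of x]
      card_walk_edges_bipartite_walk[OF assms(2)] tree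
    by simp
  ultimately have balanced:
    "count (mset (walk_steps (bipartite_walk x))) ((1, r), (0, c))
      = count (mset (walk_steps (bipartite_walk x))) ((0, c), (1, r))"
    by (rule closed_tree_walk_balanced)
  have "count (mset (walk_steps (bipartite_walk x))) ((1, r), (0, c)) = card forward"
    "count (mset (walk_steps (bipartite_walk x))) ((0, c), (1, r)) = card backward"
    unfolding walk_steps_bipartite_walk count_mset count_list_eq_length_filter length_filter_conv_card
      forward_def backward_def
    using assms(2) by (auto simp: walk_entry_def mod2_eq_if split: if_splits intro!: arg_cong[where f = card])
  then have "card forward = card backward"
    using balanced by simp
  moreover have "{j. j < length x \<and> walk_entry x j = e} = forward \<union> backward" "forward \<inter> backward = {}"
    by (auto simp: forward_def backward_def e)
  moreover have "finite forward" "finite backward"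
    by (simp_all add: forward_def backward_def)
  ultimately show ?thesis
    by (simp add: net_flow_def sum.union_disjoint walk_sign_def forward_def backward_def)
qed

lemma flow_prod_tree:
  assumes "x \<noteq> []" "even (length x)" "card (set x) = card (walk_entries x) + 1"
  shows "flow_prod F x = F 0 ^ card (walk_entries x)"
  by (simp add: flow_prod_def net_flow_eq_0_if_tree[OF assms])

section \<open>Expansion of the trace over closed index walks\<close>

primrec mat_prod_upto :: "nat \<Rightarrow> (nat \<Rightarrow> 'a::comm_ring_1 mat) \<Rightarrow> nat \<Rightarrow> 'a mat" where
  "mat_prod_upto d Q 0 = 1\<^sub>m d"
| "mat_prod_upto d Q (Suc m) = mat_prod_upto d Q m * Q m"

declare mat_prod_upto.simps [simp del]

lemma mat_prod_upto_carrier: "(\<And>j. Q j \<in> carrier_mat d d) \<Longrightarrow> mat_prod_upto d Q m \<in> carrier_mat d d"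
  by (induction m) (auto simp: mat_prod_upto.simps)

lemma power_mult_eq_mat_prod_upto:
  assumes A: "A \<in> carrier_mat d d" and C: "C \<in> carrier_mat d d"
  shows "(A * C) ^\<^sub>m k = mat_prod_upto d (\<lambda>j. if even j then A else C) (2 * k)"
proof (induction k)
  case 0
  then show ?case
    using A by (simp add: mat_prod_upto.simps)
next
  case (Suc k)
  have "mat_prod_upto d (\<lambda>j. if even j then A else C) (2 * k) \<in> carrier_mat d d"
    by (rule mat_prod_upto_carrier) (use A C in auto)
  then show ?case
    using Suc A C by (simp add: assoc_mult_mat mat_prod_upto.simps)
qed

lemma index_lists_Suc_snoc: "index_lists d (Suc m) = (\<lambda>(ys, t). ys @ [t]) ` (index_lists d m \<times> {..<d})"
proof
  show "index_lists d (Suc m) \<subseteq> (\<lambda>(ys, t). ys @ [t]) ` (index_lists d m \<times> {..<d})"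
  proof
    fix zs assume zs: "zs \<in> index_lists d (Suc m)"
    then have "zs \<noteq> []"
      by (auto simp: index_lists_def)
    then have "zs = butlast zs @ [last zs]" "last zs \<in> set zs"
      by simp_all
    moreover have "butlast zs \<in> index_lists d m"
      using zs by (auto simp: index_lists_def dest: in_set_butlastD)
    ultimately show "zs \<in> (\<lambda>(ys, t). ys @ [t]) ` (index_lists d m \<times> {..<d})"
      using zs by (auto simp: index_lists_def intro!: image_eqI[of zs _ "(butlast zs, last zs)"])
  qed
qed (auto simp: index_lists_def)

lemma index_lists_Suc_Cons: "index_lists d (Suc m) = (\<lambda>(t, ys). t # ys) ` ({..<d} \<times> index_lists d m)"
  by (auto simp: index_lists_def image_iff length_Suc_conv)

lemma prod_path_snoc:
  assumes "length ys = m"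
  shows "(\<Prod>j<Suc m. Q j $$ ((i # ys) ! j, (i # ys @ [t]) ! Suc j)) * Q (Suc m) $$ (t, l)
    = (\<Prod>j<Suc (Suc m). Q j $$ ((i # ys @ [t]) ! j, (i # (ys @ [t]) @ [l]) ! Suc j))"
proof -
  have "(\<Prod>j<Suc m. Q j $$ ((i # ys @ [t]) ! j, (i # (ys @ [t]) @ [l]) ! Suc j))
      = (\<Prod>j<Suc m. Q j $$ ((i # ys) ! j, (i # ys @ [t]) ! Suc j))"
  proof (rule prod.cong[OF refl])
    fix j assume "j \<in> {..<Suc m}"
    then have "(i # ys @ [t]) ! j = (i # ys) ! j" "(i # (ys @ [t]) @ [l]) ! Suc j = (i # ys @ [t]) ! Suc j"
      using assms by (cases j; simp add: nth_append)+
    then show "Q j $$ ((i # ys @ [t]) ! j, (i # (ys @ [t]) @ [l]) ! Suc j)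
        = Q j $$ ((i # ys) ! j, (i # ys @ [t]) ! Suc j)"
      by simp
  qed
  moreover have "(i # ys @ [t]) ! Suc m = t" "(i # (ys @ [t]) @ [l]) ! Suc (Suc m) = l"
    using assms by (simp_all add: nth_append)
  ultimately show ?thesis
    by (simp only: prod.lessThan_Suc[of _ "Suc m"])
qed

lemma mat_prod_upto_entry:
  assumes Q: "\<And>j. Q j \<in> carrier_mat d d" and "i < d" "l < d"
  shows "mat_prod_upto d Q (Suc m) $$ (i, l)
    = (\<Sum>ys\<in>index_lists d m. \<Prod>j<Suc m. Q j $$ ((i # ys) ! j, (i # ys @ [l]) ! Suc j))"
  using \<open>l < d\<close>
proof (induction m arbitrary: l)
  case 0
  have "index_lists d 0 = {[]}"
    by (auto simp: index_lists_def)
  then show ?case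
    using Q[of 0] \<open>i < d\<close> 0 by (simp add: mat_prod_upto.simps)
next
  case (Suc m)
  have "mat_prod_upto d Q (Suc m) \<in> carrier_mat d d"
    by (rule mat_prod_upto_carrier[OF Q])
  then have "mat_prod_upto d Q (Suc (Suc m)) $$ (i, l)
      = (\<Sum>t<d. mat_prod_upto d Q (Suc m) $$ (i, t) * Q (Suc m) $$ (t, l))"
    using Q[of "Suc m"] \<open>i < d\<close> Suc.prems
    by (simp add: mat_prod_upto.simps(2)[of d Q "Suc m"] scalar_prod_def atLeast0LessThan)
  also have "\<dots> = (\<Sum>t<d. \<Sum>ys\<in>index_lists d m.
      (\<Prod>j<Suc m. Q j $$ ((i # ys) ! j, (i # ys @ [t]) ! Suc j)) * Q (Suc m) $$ (t, l))"
    by (intro sum.cong refl) (simp add: Suc.IH sum_distrib_right)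
  also have "\<dots> = (\<Sum>(ys, t)\<in>index_lists d m \<times> {..<d}.
      (\<Prod>j<Suc m. Q j $$ ((i # ys) ! j, (i # ys @ [t]) ! Suc j)) * Q (Suc m) $$ (t, l))"
    by (subst sum.swap) (simp add: sum.cartesian_product)
  also have "\<dots> = (\<Sum>(ys, t)\<in>index_lists d m \<times> {..<d}.
      \<Prod>j<Suc (Suc m). Q j $$ ((i # ys @ [t]) ! j, (i # (ys @ [t]) @ [l]) ! Suc j))"
    by (rule sum.cong[OF refl], clarify, rule prod_path_snoc) (simp add: length_index_lists)
  also have "\<dots> = (\<Sum>zs\<in>index_lists d (Suc m).
      \<Prod>j<Suc (Suc m). Q j $$ ((i # zs) ! j, (i # zs @ [l]) ! Suc j))"
    unfolding index_lists_Suc_snoc by (subst sum.reindex) (auto simp: inj_on_def case_prod_unfold)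
  finally show ?case .
qed

lemma trace_mat_prod_upto:
  assumes Q: "\<And>j. Q j \<in> carrier_mat d d"
  shows "mat_trace (mat_prod_upto d Q (Suc m))
    = (\<Sum>x\<in>index_lists d (Suc m). \<Prod>j<Suc m. Q j $$ (x ! j, x ! (Suc j mod Suc m)))"
proof -
  have "mat_prod_upto d Q (Suc m) \<in> carrier_mat d d"
    by (rule mat_prod_upto_carrier[OF Q])
  then have "mat_trace (mat_prod_upto d Q (Suc m))
      = (\<Sum>i<d. \<Sum>ys\<in>index_lists d m. \<Prod>j<Suc m. Q j $$ ((i # ys) ! j, (i # ys @ [i]) ! Suc j))"
    unfolding mat_trace_def by (intro sum.cong) (auto simp: mat_prod_upto_entry[OF Q])
  also have "\<dots> = (\<Sum>(i, ys)\<in>{..<d} \<times> index_lists d m.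
      \<Prod>j<Suc m. Q j $$ ((i # ys) ! j, (i # ys) ! (Suc j mod Suc m)))"
    unfolding sum.cartesian_product[symmetric]
  proof (intro sum.cong prod.cong refl)
    fix i ys j assume "ys \<in> index_lists d m" "j \<in> {..<Suc m}"
    then have "(i # ys @ [i]) ! Suc j = (i # ys) ! (Suc j mod Suc m)"
      by (cases "Suc j = Suc m") (auto simp: nth_append length_index_lists)
    then show "Q j $$ ((i # ys) ! j, (i # ys @ [i]) ! Suc j) = Q j $$ ((i # ys) ! j, (i # ys) ! (Suc j mod Suc m))"
      by simp
  qed
  also have "\<dots> = (\<Sum>x\<in>index_lists d (Suc m). \<Prod>j<Suc m. Q j $$ (x ! j, x ! (Suc j mod Suc m)))"
    unfolding index_lists_Suc_Cons by (subst sum.reindex) (auto simp: inj_on_def case_prod_unfold)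
  finally show ?thesis .
qed

lemma trace_power_mult:
  fixes A C :: "'a::comm_ring_1 mat"
  assumes "A \<in> carrier_mat d d" "C \<in> carrier_mat d d" "k \<ge> 1"
  shows "mat_trace ((A * C) ^\<^sub>m k)
    = (\<Sum>x\<in>index_lists d (2 * k). \<Prod>j<2 * k. (if even j then A else C) $$ (x ! j, x ! (Suc j mod (2 * k))))"
proof -
  have "2 * k \<noteq> 0"
    using assms(3) by simp
  then obtain m where m: "2 * k = Suc m"
    using not0_implies_Suc by blast
  show ?thesis
    unfolding power_mult_eq_mat_prod_upto[OF assms(1,2)] m
    by (rule trace_mat_prod_upto) (use assms in auto)
qed

lemma mat_adjoint_carrier: "A \<in> carrier_mat d d \<Longrightarrow> mat_adjoint A \<in> carrier_mat d d"
  by (auto simp: mat_adjoint_def)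

lemma index_mat_adjoint:
  "A \<in> carrier_mat d d \<Longrightarrow> i < d \<Longrightarrow> j < d \<Longrightarrow> mat_adjoint A $$ (i, j) = conjugate (A $$ (j, i))"
  by (simp add: mat_adjoint_def mat_of_rows_index)

lemma nth_index_lists_cyclic:
  assumes "x \<in> index_lists d n" "j < n"
  shows "x ! j < d" "x ! (Suc j mod n) < d"
  using assms nth_index_lists[OF assms(1)] by (simp_all add: length_index_lists)

lemma trace_B_theta_power:
  assumes "k \<ge> 1"
  shows "mat_trace ((mat_adjoint (B_theta d b \<theta>) * B_theta d b \<theta>) ^\<^sub>m k)
    = (\<Sum>x\<in>index_lists d (2 * k). complex_of_real (\<Prod>j<2 * k. of_bool (b (walk_entry x j)))
        * (\<Prod>j<2 * k. exp (\<i> * of_int (walk_sign j) * complex_of_real (\<theta> (walk_entry x j)))))"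
proof -
  have B: "B_theta d b \<theta> \<in> carrier_mat d d"
    by (simp add: B_theta_def)
  show ?thesis
    unfolding trace_power_mult[OF mat_adjoint_carrier[OF B] B assms] of_real_prod prod.distrib[symmetric]
  proof (intro sum.cong prod.cong refl)
    fix x j assume x: "x \<in> index_lists d (2 * k)" and "j \<in> {..<2 * k}"
    then have "x ! j < d" "x ! (Suc j mod (2 * k)) < d" "length x = 2 * k"
      using nth_index_lists_cyclic[OF x] length_index_lists[OF x] by simp_all
    then show "(if even j then mat_adjoint (B_theta d b \<theta>) else B_theta d b \<theta>) $$ (x ! j, x ! (Suc j mod (2 * k)))
        = complex_of_real (of_bool (b (walk_entry x j)))
          * exp (\<i> * of_int (walk_sign j) * complex_of_real (\<theta> (walk_entry x j)))"
      by (cases "even j"; simp add: index_mat_adjoint[OF B];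
          simp add: B_theta_def walk_entry_def walk_sign_def exp_cnj)
  qed
qed

lemma trace_B_mat_power:
  assumes "k \<ge> 1"
  shows "mat_trace ((transpose_mat (B_mat d b) * B_mat d b) ^\<^sub>m k)
    = (\<Sum>x\<in>index_lists d (2 * k). \<Prod>j<2 * k. of_bool (b (walk_entry x j)))"
proof -
  have B: "B_mat d b \<in> carrier_mat d d"
    by (simp add: B_mat_def)
  show ?thesis
    unfolding trace_power_mult[OF transpose_carrier_mat[THEN iffD2, OF B] B assms]
  proof (intro sum.cong prod.cong refl)
    fix x j assume x: "x \<in> index_lists d (2 * k)" and "j \<in> {..<2 * k}"
    then have "x ! j < d" "x ! (Suc j mod (2 * k)) < d" "length x = 2 * k"
      using nth_index_lists_cyclic[OF x] length_index_lists[OF x] by simp_all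
    then show "(if even j then transpose_mat (B_mat d b) else B_mat d b) $$ (x ! j, x ! (Suc j mod (2 * k)))
        = of_bool (b (walk_entry x j))"
      by (simp add: B_mat_def walk_entry_def)
  qed
qed

section \<open>Averaging over the ensembles\<close>

lemma prob_space_bern_ens: "prob_space (bern_ens d)"
  unfolding bern_ens_def by (intro prob_space_PiM prob_space_measure_pmf)

lemma prob_space_phase_ens: "prob_space \<mu> \<Longrightarrow> prob_space (phase_ens \<mu> d)"
  unfolding phase_ens_def by (intro prob_space_PiM)

lemma integral_pair_measure_mult:
  fixes f :: "'a \<Rightarrow> complex" and g :: "'b \<Rightarrow> complex"
  assumes "prob_space M1" "prob_space M2"
    and f: "f \<in> borel_measurable M1" and g: "g \<in> borel_measurable M2"
    and bounded: "\<And>x. norm (f x) \<le> Bf" "\<And>y. norm (g y) \<le> Bg"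
  shows "integrable (M1 \<Otimes>\<^sub>M M2) (\<lambda>z. f (fst z) * g (snd z))"
    and "(\<integral>z. f (fst z) * g (snd z) \<partial>(M1 \<Otimes>\<^sub>M M2)) = integral\<^sup>L M1 f * integral\<^sup>L M2 g"
proof -
  interpret pair_sigma_finite M1 M2
    using assms(1,2) by (simp add: pair_sigma_finite_def prob_space_imp_sigma_finite)
  interpret prob_space "M1 \<Otimes>\<^sub>M M2"
    using assms(1,2) by (rule prob_space_pair)
  have "norm (f (fst z) * g (snd z)) \<le> Bf * Bg" for z
    unfolding norm_mult using bounded by (intro mult_mono) (auto intro: order_trans[OF norm_ge_zero])
  then show int: "integrable (M1 \<Otimes>\<^sub>M M2) (\<lambda>z. f (fst z) * g (snd z))"
    by (intro integrable_const_bound[where B = "Bf * Bg"]) (use f g in auto)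
  show "(\<integral>z. f (fst z) * g (snd z) \<partial>(M1 \<Otimes>\<^sub>M M2)) = integral\<^sup>L M1 f * integral\<^sup>L M2 g"
    using integral_fst'[OF int] by simp
qed

lemma prod_of_bool: "finite A \<Longrightarrow> (\<Prod>x\<in>A. of_bool (P x)) = (of_bool (\<forall>x\<in>A. P x) :: 'a::comm_semiring_1)"
  by (induction A rule: finite_induct) auto

lemma prod_of_bool_walk_entries:
  "length x = n \<Longrightarrow>
    (\<Prod>j<n. of_bool (b (walk_entry x j))) = (\<Prod>e\<in>walk_entries x. of_bool (b e) :: 'a::comm_semiring_1)"
  by (simp add: prod_of_bool walk_entries_def)

lemma integral_bern_ens_prod:
  assumes "E \<subseteq> entries d"
  shows "(\<integral>b. (\<Prod>e\<in>E. of_bool (b e)) \<partial>bern_ens d) = (1 / real d) ^ card E"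
proof -
  define h :: "nat \<times> nat \<Rightarrow> bool \<Rightarrow> real" where "h e v = (if e \<in> E then of_bool v else 1)" for e v
  interpret product_prob_space "\<lambda>_. measure_pmf (bernoulli_pmf (1 / real d))" "entries d"
    by (rule product_prob_spaceI) (rule prob_space_measure_pmf)
  have "(\<Prod>e\<in>E. of_bool (b e)) = (\<Prod>e\<in>entries d. h e (b e))" for b
    using assms by (intro prod.mono_neutral_cong_left) (auto simp: h_def)
  then have "(\<integral>b. (\<Prod>e\<in>E. of_bool (b e)) \<partial>bern_ens d)
      = (\<Prod>e\<in>entries d. integral\<^sup>L (measure_pmf (bernoulli_pmf (1 / real d))) (h e))"
    unfolding bern_ens_def by (simp add: product_integral_prod integrable_measure_pmf_finite)
  also have "\<dots> = (\<Prod>e\<in>entries d. if e \<in> E then 1 / real d else 1)"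
    by (intro prod.cong refl) (auto simp: h_def divide_le_eq)
  also have "\<dots> = (1 / real d) ^ card E"
    using assms by (simp add: prod.If_cases Int_absorb1)
  finally show ?thesis .
qed

definition phase_char :: "real measure \<Rightarrow> int \<Rightarrow> complex" where
  "phase_char \<mu> c = (\<integral>t. exp (\<i> * of_int c * complex_of_real t) \<partial>\<mu>)"

lemma phase_char_0: "prob_space \<mu> \<Longrightarrow> phase_char \<mu> 0 = 1"
  by (simp add: phase_char_def prob_space.prob_space)

lemma norm_exp_i_times_int: "norm (exp (\<i> * of_int c * complex_of_real t)) = 1"
  using norm_exp_i_times[of "of_int c * t"] by (simp add: mult.assoc)

lemma borel_measurable_exp_i_times_int:
  assumes "sets \<mu> = sets borel"
  shows "(\<lambda>t. exp (\<i> * of_int c * complex_of_real t)) \<in> borel_measurable \<mu>"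
  unfolding measurable_cong_sets[OF assms refl]
  by (intro borel_measurable_continuous_onI continuous_intros)

lemma integral_phase_ens_prod:
  assumes "prob_space \<mu>" "sets \<mu> = sets borel" "E \<subseteq> entries d"
  shows "(\<integral>\<theta>. (\<Prod>e\<in>E. exp (\<i> * of_int (c e) * complex_of_real (\<theta> e))) \<partial>phase_ens \<mu> d)
    = (\<Prod>e\<in>E. phase_char \<mu> (c e))"
proof -
  define c' where "c' e = (if e \<in> E then c e else 0)" for e
  interpret product_prob_space "\<lambda>_. \<mu>" "entries d"
    by (rule product_prob_spaceI) (rule assms(1))
  have "(\<Prod>e\<in>E. exp (\<i> * of_int (c e) * complex_of_real (\<theta> e)))
      = (\<Prod>e\<in>entries d. exp (\<i> * of_int (c' e) * complex_of_real (\<theta> e)))" for \<theta>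
    using assms(3) by (intro prod.mono_neutral_cong_left) (auto simp: c'_def)
  moreover have "integrable \<mu> (\<lambda>t. exp (\<i> * of_int (c' e) * complex_of_real t))" for e
    by (rule finite_measure.integrable_const_bound[OF prob_space.finite_measure[OF assms(1)], where B = 1])
      (simp_all add: norm_exp_i_times_int borel_measurable_exp_i_times_int[OF assms(2)])
  ultimately have "(\<integral>\<theta>. (\<Prod>e\<in>E. exp (\<i> * of_int (c e) * complex_of_real (\<theta> e))) \<partial>phase_ens \<mu> d)
      = (\<Prod>e\<in>entries d. phase_char \<mu> (c' e))"
    unfolding phase_ens_def phase_char_def
    by (simp add: product_integral_prod[where f = "\<lambda>e t. exp (\<i> * of_int (c' e) * complex_of_real t)"])
  also have "\<dots> = (\<Prod>e\<in>E. phase_char \<mu> (c e))"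
    using assms(3) phase_char_0[OF assms(1)]
    by (intro prod.mono_neutral_cong_right) (auto simp: c'_def)
  finally show ?thesis .
qed

lemma prod_exp_walk_sign:
  assumes "length x = n"
  shows "(\<Prod>j<n. exp (\<i> * of_int (walk_sign j) * complex_of_real (\<theta> (walk_entry x j))))
    = (\<Prod>e\<in>walk_entries x. exp (\<i> * of_int (net_flow x e) * complex_of_real (\<theta> e)))"
proof -
  have "(\<Sum>j<length x. \<i> * of_int (walk_sign j) * complex_of_real (\<theta> (walk_entry x j)))
      = (\<Sum>e\<in>walk_entries x. \<Sum>j | j \<in> {..<length x} \<and> walk_entry x j = e.
          \<i> * of_int (walk_sign j) * complex_of_real (\<theta> (walk_entry x j)))"
    by (rule sum.group[symmetric]) (auto simp: walk_entries_def)
  also have "\<dots> = (\<Sum>e\<in>walk_entries x. \<i> * of_int (net_flow x e) * complex_of_real (\<theta> e))"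
  proof (rule sum.cong[OF refl])
    fix e
    have "(\<Sum>j | j \<in> {..<length x} \<and> walk_entry x j = e.
          \<i> * of_int (walk_sign j) * complex_of_real (\<theta> (walk_entry x j)))
        = (\<Sum>j | j < length x \<and> walk_entry x j = e. \<i> * complex_of_real (\<theta> e) * of_int (walk_sign j))"
      by (intro sum.cong) auto
    then show "(\<Sum>j | j \<in> {..<length x} \<and> walk_entry x j = e.
          \<i> * of_int (walk_sign j) * complex_of_real (\<theta> (walk_entry x j)))
        = \<i> * of_int (net_flow x e) * complex_of_real (\<theta> e)"
      by (simp add: net_flow_def sum_distrib_left mult_ac)
  qed
  finally show ?thesis
    using assms by (simp add: exp_sum flip: exp_sum)
qed

lemma borel_measurable_bern_ens_prod:
  assumes "E \<subseteq> entries d"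
  shows "(\<lambda>b. \<Prod>e\<in>E. of_bool (b e) :: real) \<in> borel_measurable (bern_ens d)"
proof (rule borel_measurable_prod)
  fix e assume "e \<in> E"
  then have "e \<in> entries d"
    using assms by blast
  have "(of_bool :: bool \<Rightarrow> real) \<in> borel_measurable (measure_pmf (bernoulli_pmf (1 / real d)))"
    by simp
  then show "(\<lambda>b. of_bool (b e) :: real) \<in> borel_measurable (bern_ens d)"
    unfolding bern_ens_def by (rule measurable_compose[OF measurable_component_singleton[OF \<open>e \<in> entries d\<close>]])
qed

lemma borel_measurable_phase_ens_prod:
  assumes "sets \<mu> = sets borel" "E \<subseteq> entries d"
  shows "(\<lambda>\<theta>. \<Prod>e\<in>E. exp (\<i> * of_int (c e) * complex_of_real (\<theta> e))) \<in> borel_measurable (phase_ens \<mu> d)"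
proof (rule borel_measurable_prod)
  fix e assume "e \<in> E"
  then have e: "e \<in> entries d"
    using assms by blast
  show "(\<lambda>\<theta>. exp (\<i> * of_int (c e) * complex_of_real (\<theta> e))) \<in> borel_measurable (phase_ens \<mu> d)"
    unfolding phase_ens_def
    by (rule measurable_compose[OF measurable_component_singleton[OF e] borel_measurable_exp_i_times_int[OF assms(1)]])
qed

lemma integral_walk_term:
  assumes "prob_space \<mu>" "sets \<mu> = sets borel" "x \<in> index_lists d n"
  defines "summand \<equiv> \<lambda>(b, \<theta>). complex_of_real (\<Prod>e\<in>walk_entries x. of_bool (b e))
      * (\<Prod>e\<in>walk_entries x. exp (\<i> * of_int (net_flow x e) * complex_of_real (\<theta> e)))"
  shows "integrable (bern_ens d \<Otimes>\<^sub>M phase_ens \<mu> d) summand"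
    and "(\<integral>bt. summand bt \<partial>(bern_ens d \<Otimes>\<^sub>M phase_ens \<mu> d))
      = complex_of_real ((1 / real d) ^ card (walk_entries x)) * flow_prod (phase_char \<mu>) x"
proof -
  have E: "walk_entries x \<subseteq> entries d"
    by (rule walk_entries_subset_entries[OF assms(3)])
  have "norm (complex_of_real (\<Prod>e\<in>walk_entries x. of_bool (b e))) \<le> 1" for b :: "nat \<times> nat \<Rightarrow> bool"
    by (simp add: prod_of_bool)
  moreover have "norm (\<Prod>e\<in>walk_entries x. exp (\<i> * of_int (net_flow x e) * complex_of_real (\<theta> e))) \<le> 1"
    for \<theta> :: "nat \<times> nat \<Rightarrow> real"
    by (simp add: prod_norm[symmetric] norm_exp_i_times_int)
  moreover have "(\<lambda>b. complex_of_real (\<Prod>e\<in>walk_entries x. of_bool (b e))) \<in> borel_measurable (bern_ens d)"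
    using borel_measurable_bern_ens_prod[OF E] by measurable
  note pair = integral_pair_measure_mult[OF prob_space_bern_ens prob_space_phase_ens[OF assms(1)]
      this borel_measurable_phase_ens_prod[OF assms(2) E] calculation(1,2)]
  show "integrable (bern_ens d \<Otimes>\<^sub>M phase_ens \<mu> d) summand"
    using pair(1) by (simp add: summand_def case_prod_unfold)
  have "(\<integral>b. complex_of_real (\<Prod>e\<in>walk_entries x. of_bool (b e)) \<partial>bern_ens d)
      = complex_of_real ((1 / real d) ^ card (walk_entries x))"
    by (simp only: integral_complex_of_real integral_bern_ens_prod[OF E])
  moreover have "(\<integral>\<theta>. (\<Prod>e\<in>walk_entries x. exp (\<i> * of_int (net_flow x e) * complex_of_real (\<theta> e)))
      \<partial>phase_ens \<mu> d) = flow_prod (phase_char \<mu>) x"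
    unfolding flow_prod_def by (rule integral_phase_ens_prod[OF assms(1,2) E])
  ultimately show "(\<integral>bt. summand bt \<partial>(bern_ens d \<Otimes>\<^sub>M phase_ens \<mu> d))
      = complex_of_real ((1 / real d) ^ card (walk_entries x)) * flow_prod (phase_char \<mu>) x"
    using pair(2) by (simp add: summand_def case_prod_unfold)
qed

lemma expectation_trace_B_theta_power:
  assumes "prob_space \<mu>" "sets \<mu> = sets borel" "k \<ge> 1"
  shows "(\<integral>bt. mat_trace ((mat_adjoint (B_theta d (fst bt) (snd bt)) * B_theta d (fst bt) (snd bt)) ^\<^sub>m k)
      \<partial>(bern_ens d \<Otimes>\<^sub>M phase_ens \<mu> d))
    = (\<Sum>x\<in>index_lists d (2 * k). complex_of_real ((1 / real d) ^ card (walk_entries x))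
        * flow_prod (phase_char \<mu>) x)"
proof -
  have "mat_trace ((mat_adjoint (B_theta d b \<theta>) * B_theta d b \<theta>) ^\<^sub>m k)
      = (\<Sum>x\<in>index_lists d (2 * k). complex_of_real (\<Prod>e\<in>walk_entries x. of_bool (b e))
          * (\<Prod>e\<in>walk_entries x. exp (\<i> * of_int (net_flow x e) * complex_of_real (\<theta> e))))" for b \<theta>
    unfolding trace_B_theta_power[OF assms(3)]
    by (intro sum.cong refl) (simp add: length_index_lists prod_of_bool_walk_entries prod_exp_walk_sign)
  then show ?thesis
    using integral_walk_term[OF assms(1,2)]
    by (simp add: case_prod_beta' Bochner_Integration.integral_sum)
qed

lemma expectation_trace_B_mat_power:
  assumes "k \<ge> 1"
  shows "(\<integral>b. mat_trace ((transpose_mat (B_mat d b) * B_mat d b) ^\<^sub>m k) \<partial>bern_ens d)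
    = (\<Sum>x\<in>index_lists d (2 * k). (1 / real d) ^ card (walk_entries x))"
proof -
  have "mat_trace ((transpose_mat (B_mat d b) * B_mat d b) ^\<^sub>m k)
      = (\<Sum>x\<in>index_lists d (2 * k). \<Prod>e\<in>walk_entries x. of_bool (b e))" for b
    unfolding trace_B_mat_power[OF assms]
    by (intro sum.cong refl) (simp add: length_index_lists prod_of_bool_walk_entries)
  moreover have "integrable (bern_ens d) (\<lambda>b. \<Prod>e\<in>walk_entries x. of_bool (b e) :: real)"
    if "x \<in> index_lists d (2 * k)" for x
    using borel_measurable_bern_ens_prod[OF walk_entries_subset_entries[OF that]]
    by (intro prob_space.finite_measure finite_measure.integrable_const_bound[where B = 1]
        prob_space_bern_ens) (auto simp: prod_of_bool)
  ultimately show ?thesis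
    by (simp add: Bochner_Integration.integral_sum integral_bern_ens_prod walk_entries_subset_entries)
qed

section \<open>The large dimension limit\<close>

definition tree_shapes :: "nat \<Rightarrow> nat list set" where
  "tree_shapes n = {s \<in> shapes n. card (set s) = card (walk_entries s) + 1}"

lemma tendsto_falling_factorial_over_power:
  "(\<lambda>d. real (\<Prod>i<q. d - i) / real d ^ (q + m)) \<longlonglongrightarrow> of_bool (m = 0)"
proof -
  have "\<forall>\<^sub>F d in sequentially. (\<Prod>i<q. 1 - real i * inverse (real d)) * inverse (real d) ^ m
      = real (\<Prod>i<q. d - i) / real d ^ (q + m)"
    using eventually_ge_at_top[of "Suc q"]
  proof eventually_elim
    case (elim d)
    then have d: "real d > 0"
      by simp
    have "real (\<Prod>i<q. d - i) = (\<Prod>i<q. real d - real i)"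
      using elim by (simp add: of_nat_prod of_nat_diff)
    also have "\<dots> = (\<Prod>i<q. real d * (1 - real i * inverse (real d)))"
      using d by (intro prod.cong refl) (simp add: field_simps)
    also have "\<dots> = real d ^ q * (\<Prod>i<q. 1 - real i * inverse (real d))"
      by (simp add: prod.distrib)
    finally show ?case
      using d by (simp add: power_add field_simps)
  qed
  moreover have "(\<lambda>d. (\<Prod>i<q. 1 - real i * inverse (real d)) * inverse (real d) ^ m)
      \<longlonglongrightarrow> (\<Prod>i<q. 1 - real i * 0) * 0 ^ m"
    by (intro tendsto_intros lim_inverse_n)
  ultimately have "(\<lambda>d. real (\<Prod>i<q. d - i) / real d ^ (q + m)) \<longlonglongrightarrow> 0 ^ m"
    by (simp add: tendsto_cong)
  then show ?thesis
    by (cases m) simp_all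
qed

lemma tendsto_shape_weight:
  assumes "s \<in> shapes n" "even n"
  shows "(\<lambda>d. real (card {x \<in> index_lists d n. shape x = s}) * (1 / real d) ^ card (walk_entries s) / real d)
    \<longlonglongrightarrow> of_bool (s \<in> tree_shapes n)"
proof -
  define q where "q = card (set s)"
  define m where "m = card (walk_entries s) + 1 - q"
  have "q \<le> card (walk_entries s) + 1"
    using card_set_le_card_walk_entries[of s] assms by (simp add: q_def length_shapes)
  then have qm: "q + m = Suc (card (walk_entries s))" and "(m = 0) = (s \<in> tree_shapes n)"
    using assms(1) by (auto simp: m_def q_def tree_shapes_def)
  moreover have "y * (1 / real d) ^ card (walk_entries s) / real d = y / real d ^ (q + m)" for y d
    unfolding qm by (cases "d = 0") (simp_all add: power_one_over field_simps)
  moreover have "card {x \<in> index_lists d n. shape x = s} = (\<Prod>i<q. d - i)" for d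
    unfolding q_def by (rule card_shape_fibre[OF assms(1)])
  ultimately show ?thesis
    using tendsto_falling_factorial_over_power[of q m] by simp
qed

lemma tendsto_normalized_walk_sum:
  assumes "even n"
  shows "(\<lambda>d. (\<Sum>x\<in>index_lists d n. (1 / real d) ^ card (walk_entries x)) / real d)
    \<longlonglongrightarrow> real (card (tree_shapes n))"
proof -
  have "(\<Sum>x\<in>index_lists d n. (1 / real d) ^ card (walk_entries x)) / real d
      = (\<Sum>s\<in>shapes n. real (card {x \<in> index_lists d n. shape x = s})
          * (1 / real d) ^ card (walk_entries s) / real d)" for d
    by (subst sum_index_lists_by_shape) (simp_all add: card_walk_entries_map sum_divide_distrib)
  moreover have "(\<lambda>d. \<Sum>s\<in>shapes n. real (card {x \<in> index_lists d n. shape x = s})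
      * (1 / real d) ^ card (walk_entries s) / real d) \<longlonglongrightarrow> (\<Sum>s\<in>shapes n. of_bool (s \<in> tree_shapes n))"
    by (intro tendsto_sum tendsto_shape_weight assms)
  moreover have "tree_shapes n \<subseteq> shapes n"
    by (auto simp: tree_shapes_def)
  ultimately show ?thesis
    by (simp add: Int_absorb1)
qed

lemma tendsto_normalized_walk_sum_flow_prod:
  fixes F :: "int \<Rightarrow> complex"
  assumes "even n" "n > 0" "F 0 = 1"
  shows "(\<lambda>d. (\<Sum>x\<in>index_lists d n. complex_of_real ((1 / real d) ^ card (walk_entries x)) * flow_prod F x)
      / of_nat d) \<longlonglongrightarrow> complex_of_real (real (card (tree_shapes n)))"
proof -
  have by_shape: "(\<Sum>x\<in>index_lists d n. complex_of_real ((1 / real d) ^ card (walk_entries x)) * flow_prod F x)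
      / of_nat d
      = (\<Sum>s\<in>shapes n. complex_of_real (real (card {x \<in> index_lists d n. shape x = s})
          * (1 / real d) ^ card (walk_entries s) / real d) * flow_prod F s)" for d
    by (subst sum_index_lists_by_shape)
      (simp_all add: card_walk_entries_map flow_prod_map sum_divide_distrib mult.assoc)
  have lim: "(\<lambda>d. \<Sum>s\<in>shapes n. complex_of_real (real (card {x \<in> index_lists d n. shape x = s})
      * (1 / real d) ^ card (walk_entries s) / real d) * flow_prod F s)
      \<longlonglongrightarrow> (\<Sum>s\<in>shapes n. complex_of_real (of_bool (s \<in> tree_shapes n)) * flow_prod F s)"
    by (intro tendsto_sum tendsto_mult tendsto_const tendsto_of_real tendsto_shape_weight assms)
  have "flow_prod F s = 1" if "s \<in> tree_shapes n" for s
  proof -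
    have "s \<in> shapes n" "card (set s) = card (walk_entries s) + 1"
      using that by (simp_all add: tree_shapes_def)
    moreover have "length s = n"
      using calculation(1) by (rule length_shapes)
    ultimately show ?thesis
      using assms flow_prod_tree[of s F] by auto
  qed
  then have "(\<Sum>s\<in>shapes n. complex_of_real (of_bool (s \<in> tree_shapes n)) * flow_prod F s)
      = (\<Sum>s\<in>shapes n. of_bool (s \<in> tree_shapes n))"
    by (intro sum.cong refl) auto
  also have "\<dots> = complex_of_real (real (card (tree_shapes n)))"
    by (simp add: tree_shapes_def Int_def)
  finally show ?thesis
    using lim by (simp only: by_shape)
qed

theorem proposition3:
  fixes \<mu> :: "real measure" and k :: nat
  assumes "prob_space \<mu>" and "sets \<mu> = sets borel" and "k \<ge> 1"
  shows "\<exists>L::real.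
    ((\<lambda>d. (\<integral>bt. mat_trace ((mat_adjoint (B_theta d (fst bt) (snd bt)) * B_theta d (fst bt) (snd bt)) ^\<^sub>m k)
              \<partial>(bern_ens d \<Otimes>\<^sub>M phase_ens \<mu> d)) / of_nat d) \<longlonglongrightarrow> complex_of_real L)
    \<and> ((\<lambda>d. (\<integral>b. mat_trace ((transpose_mat (B_mat d b) * B_mat d b) ^\<^sub>m k) \<partial>bern_ens d) / real d) \<longlonglongrightarrow> L)"
proof -
  have n: "even (2 * k)" "2 * k > 0"
    using assms(3) by auto
  show ?thesis
    unfolding expectation_trace_B_theta_power[OF assms] expectation_trace_B_mat_power[OF assms(3)]
    using tendsto_normalized_walk_sum_flow_prod[where F = "phase_char \<mu>", OF n phase_char_0[OF assms(1)]]
      tendsto_normalized_walk_sum[OF n(1)]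
    by blast
qed

end
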